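(* Let $L$ be a finite $\mathcal{L}$-lattice with $|L|\le n$. Then $L$ has the interpolation property iff every valid $a\le b$ with at most $n$ right variables has an interpolant, i.e. a formula $i$ whose variables are all intersection variables of $a,b$ such that $a\le i$ and $i\le b$ are valid.
   Context: A lattice-oriented signature $\mathcal{L}$ is a finite set of connectives. Each connective $c$ has an arity $n_c\in\mathbb{N}$ and a polarity $p_c:\{1,\dots,n_c\}\to\{-,+\}$. The signature contains binary connectives $\lor,\land,\to$ with $p_\lor(1)=p_\lor(2)=p_\land(1)=p_\land(2)=+$, $p_\to(1)=-$ and $p_\to(2)=+$; nullary connectives are truth constants. A finite $\mathcal{L}$-lattice is a finite set $L$ together with an $n_c$-ary operation $c^L$ on $L$ for each connective $c$, such that: - $(L,\lor^L,\land^L)$ is a lattice, with order $x\le y$ iff $x\land y=x$; its top element is denoted $1$; - $c^L$ is monotone in every argument $i$ with $p_c(i)=+$ and antitone in every argument $i$ with $p_c(i)=-$; - for all $a,b\in L$: $1\le a\to^L b$ iff $a\le b$. Formulas (words) are built from propositional variables using the connectives. A valuation assigns elements of $L$ to the variables and extends to all formulas via the operations $c^L$. For formulas $a,b$, "$a\le b$ is valid" means that the value of $a$ is $\le$ the value of $b$ under every valuation. For a valid $a\le b$, the variables occurring only in $a$ are the left variables, those occurring only in $b$ are the right variables, and those occurring in both are the intersection variables. $L$ has the interpolation property iff for all formulas $a,b$ with $a\le b$ valid there is a formula $i$ whose variables are all intersection variables of $a,b$ such that $a\le i$ and $i\le b$ are valid. If there are no intersection variables, $i$ must be a closed formula. 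*)

theory Defs
  imports Main
begin

datatype 'c form = Var nat | App 'c "'c form list"

fun fvars :: "'c form \<Rightarrow> nat set" where
  "fvars (Var x) = {x}"
| "fvars (App c fs) = (\<Union>f\<in>set fs. fvars f)"

fun wf_form :: "'c set \<Rightarrow> ('c \<Rightarrow> nat) \<Rightarrow> 'c form \<Rightarrow> bool" where
  "wf_form C ar (Var x) = True"
| "wf_form C ar (App c fs) = (c \<in> C \<and> length fs = ar c \<and> (\<forall>f\<in>set fs. wf_form C ar f))"

fun eval :: "('c \<Rightarrow> 'a list \<Rightarrow> 'a) \<Rightarrow> (nat \<Rightarrow> 'a) \<Rightarrow> 'c form \<Rightarrow> 'a" where
  "eval op v (Var x) = v x"
| "eval op v (App c fs) = op c (map (eval op v) fs)"

text \<open>Lattice-oriented signature: finite set C of connectives, arity ar, polarity pol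
  (pol c k = True means + for the argument with 0-based index k), containing
  distinct binary connectives jn (join), mt (meet), im (implication).\<close>
definition lsignature :: "'c set \<Rightarrow> ('c \<Rightarrow> nat) \<Rightarrow> ('c \<Rightarrow> nat \<Rightarrow> bool) \<Rightarrow> 'c \<Rightarrow> 'c \<Rightarrow> 'c \<Rightarrow> bool" where
  "lsignature C ar pol jn mt im \<longleftrightarrow>
     finite C \<and> jn \<in> C \<and> mt \<in> C \<and> im \<in> C \<and> distinct [jn, mt, im] \<and>
     ar jn = 2 \<and> ar mt = 2 \<and> ar im = 2 \<and>
     pol jn 0 \<and> pol jn 1 \<and> pol mt 0 \<and> pol mt 1 \<and> \<not> pol im 0 \<and> pol im 1"

definition lle :: "('c \<Rightarrow> 'a list \<Rightarrow> 'a) \<Rightarrow> 'c \<Rightarrow> 'a \<Rightarrow> 'a \<Rightarrow> bool" where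
  "lle op mt x y \<longleftrightarrow> op mt [x, y] = x"

definition is_lattice :: "'a set \<Rightarrow> ('c \<Rightarrow> 'a list \<Rightarrow> 'a) \<Rightarrow> 'c \<Rightarrow> 'c \<Rightarrow> bool" where
  "is_lattice L op jn mt \<longleftrightarrow>
     (\<forall>x\<in>L. \<forall>y\<in>L. op jn [x, y] = op jn [y, x] \<and> op mt [x, y] = op mt [y, x]) \<and>
     (\<forall>x\<in>L. \<forall>y\<in>L. \<forall>z\<in>L. op jn [op jn [x, y], z] = op jn [x, op jn [y, z]] \<and>
                           op mt [op mt [x, y], z] = op mt [x, op mt [y, z]]) \<and>
     (\<forall>x\<in>L. \<forall>y\<in>L. op jn [x, op mt [x, y]] = x \<and> op mt [x, op jn [x, y]] = x)"

definition is_top :: "'a set \<Rightarrow> ('c \<Rightarrow> 'a list \<Rightarrow> 'a) \<Rightarrow> 'c \<Rightarrow> 'a \<Rightarrow> bool" where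
  "is_top L op mt t \<longleftrightarrow> t \<in> L \<and> (\<forall>x\<in>L. lle op mt x t)"

definition finite_L_lattice ::
  "'c set \<Rightarrow> ('c \<Rightarrow> nat) \<Rightarrow> ('c \<Rightarrow> nat \<Rightarrow> bool) \<Rightarrow> 'c \<Rightarrow> 'c \<Rightarrow> 'c \<Rightarrow>
   'a set \<Rightarrow> ('c \<Rightarrow> 'a list \<Rightarrow> 'a) \<Rightarrow> bool" where
  "finite_L_lattice C ar pol jn mt im L op \<longleftrightarrow>
     lsignature C ar pol jn mt im \<and> finite L \<and> L \<noteq> {} \<and>
     (\<forall>c\<in>C. \<forall>xs. length xs = ar c \<and> set xs \<subseteq> L \<longrightarrow> op c xs \<in> L) \<and>
     is_lattice L op jn mt \<and>
     (\<forall>c\<in>C. \<forall>k<ar c. \<forall>xs ys.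
        length xs = ar c \<and> length ys = ar c \<and> set xs \<subseteq> L \<and> set ys \<subseteq> L \<and>
        (\<forall>l<ar c. l \<noteq> k \<longrightarrow> xs ! l = ys ! l) \<and> lle op mt (xs ! k) (ys ! k) \<longrightarrow>
        (if pol c k then lle op mt (op c xs) (op c ys) else lle op mt (op c ys) (op c xs))) \<and>
     (\<forall>t. is_top L op mt t \<longrightarrow>
        (\<forall>a\<in>L. \<forall>b\<in>L. lle op mt t (op im [a, b]) \<longleftrightarrow> lle op mt a b))"

definition valid_le :: "'a set \<Rightarrow> ('c \<Rightarrow> 'a list \<Rightarrow> 'a) \<Rightarrow> 'c \<Rightarrow> 'c form \<Rightarrow> 'c form \<Rightarrow> bool" where
  "valid_le L op mt a b \<longleftrightarrow>
     (\<forall>v. (\<forall>x. v x \<in> L) \<longrightarrow> lle op mt (eval op v a) (eval op v b))"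

definition right_vars :: "'c form \<Rightarrow> 'c form \<Rightarrow> nat set" where
  "right_vars a b = fvars b - fvars a"

definition is_interpolant ::
  "'c set \<Rightarrow> ('c \<Rightarrow> nat) \<Rightarrow> 'a set \<Rightarrow> ('c \<Rightarrow> 'a list \<Rightarrow> 'a) \<Rightarrow> 'c \<Rightarrow>
   'c form \<Rightarrow> 'c form \<Rightarrow> 'c form \<Rightarrow> bool" where
  "is_interpolant C ar L op mt a b i \<longleftrightarrow>
     wf_form C ar i \<and> fvars i \<subseteq> fvars a \<inter> fvars b \<and>
     valid_le L op mt a i \<and> valid_le L op mt i b"

definition interpolation_property ::
  "'c set \<Rightarrow> ('c \<Rightarrow> nat) \<Rightarrow> 'a set \<Rightarrow> ('c \<Rightarrow> 'a list \<Rightarrow> 'a) \<Rightarrow> 'c \<Rightarrow> bool" where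
  "interpolation_property C ar L op mt \<longleftrightarrow>
     (\<forall>a b. wf_form C ar a \<and> wf_form C ar b \<and> valid_le L op mt a b \<longrightarrow>
        (\<exists>i. is_interpolant C ar L op mt a b i))"

end

theory Submission
  imports Defs
begin

text \<open>Let \<open>R\<close> be the right variables of a valid \<open>a \<le> b\<close> and \<open>F\<close> a set of
  \<open>|L|\<close> fresh variables. Replace \<open>b\<close> by the meet \<open>b'\<close> of all instances of \<open>b\<close> under renamings
  that send \<open>R\<close> into \<open>F\<close> and fix everything else. Since \<open>a\<close> does not mention \<open>R\<close>, each instance
  is still above \<open>a\<close>, so \<open>a \<le> b'\<close> is valid, and its right variables lie in \<open>F\<close>. Conversely, a
  valuation of \<open>R\<close> takes at most \<open>|L|\<close> values, so it factors through one of these renamings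
  followed by a valuation of \<open>F\<close>; hence any \<open>i \<le> b'\<close> not mentioning \<open>F\<close> also satisfies
  \<open>i \<le> b\<close>, and an interpolant of \<open>a, b'\<close> is one of \<open>a, b\<close>.\<close>

fun rename_form :: "(nat \<Rightarrow> nat) \<Rightarrow> 'c form \<Rightarrow> 'c form" where
  "rename_form r (Var x) = Var (r x)"
| "rename_form r (App c fs) = App c (map (rename_form r) fs)"

lemma eval_rename_form: "eval op v (rename_form r f) = eval op (v \<circ> r) f"
  by (induction f) (simp_all cong: map_cong)

lemma fvars_rename_form: "fvars (rename_form r f) = r ` fvars f"
  by (induction f) auto

lemma wf_form_rename_form: "wf_form C ar f \<Longrightarrow> wf_form C ar (rename_form r f)"
  by (induction f) auto

lemma eval_cong: "(\<And>x. x \<in> fvars f \<Longrightarrow> v x = w x) \<Longrightarrow> eval op v f = eval op w f"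
proof (induction f)
  case (App c fs)
  then have "map (eval op v) fs = map (eval op w) fs"
    by (intro map_cong) auto
  then show ?case by (simp del: map_eq_conv)
qed simp

lemma finite_fvars: "finite (fvars f)"
  by (induction f) auto

text \<open>\<open>meet_form m f gs\<close> is the meet of \<open>f # gs\<close>: the list is kept nonempty because the
  signature need not contain a top constant to serve as the empty meet.\<close>

fun meet_form :: "'c \<Rightarrow> 'c form \<Rightarrow> 'c form list \<Rightarrow> 'c form" where
  "meet_form m f [] = f"
| "meet_form m f (g # gs) = App m [f, meet_form m g gs]"

lemma fvars_meet_form: "fvars (meet_form m f gs) = (\<Union>g\<in>set (f # gs). fvars g)"
  by (induction gs arbitrary: f) auto

lemma wf_form_meet_form:
  "\<lbrakk>m \<in> C; ar m = 2; \<forall>g\<in>set (f # gs). wf_form C ar g\<rbrakk> \<Longrightarrow> wf_form C ar (meet_form m f gs)"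
  by (induction gs arbitrary: f) auto

context
  fixes L :: "'a set" and op :: "'c \<Rightarrow> 'a list \<Rightarrow> 'a" and jn mt :: 'c
  assumes lattice: "is_lattice L op jn mt"
    and meet_closed: "\<And>x y. x \<in> L \<Longrightarrow> y \<in> L \<Longrightarrow> op mt [x, y] \<in> L"
begin

lemma meet_idem: "x \<in> L \<Longrightarrow> op mt [x, x] = x"
  using lattice meet_closed unfolding is_lattice_def by metis

lemma lle_trans: "\<lbrakk>x \<in> L; y \<in> L; z \<in> L; lle op mt x y; lle op mt y z\<rbrakk> \<Longrightarrow> lle op mt x z"
  using lattice unfolding lle_def is_lattice_def by metis

lemma lle_meetI:
  "\<lbrakk>a \<in> L; x \<in> L; y \<in> L; lle op mt a x; lle op mt a y\<rbrakk> \<Longrightarrow> lle op mt a (op mt [x, y])"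
  using lattice unfolding lle_def is_lattice_def by metis

lemma lle_meet1:
  assumes "x \<in> L" "y \<in> L"
  shows "lle op mt (op mt [x, y]) x"
proof -
  have "op mt [op mt [x, y], x] = op mt [op mt [x, x], y]"
    using lattice assms unfolding is_lattice_def by metis
  then show ?thesis
    unfolding lle_def using meet_idem assms by simp
qed

lemma lle_meet2: "x \<in> L \<Longrightarrow> y \<in> L \<Longrightarrow> lle op mt (op mt [x, y]) y"
  using lle_meet1[of y x] lattice unfolding is_lattice_def by metis

lemma eval_meet_form_lower:
  assumes "\<forall>g\<in>set (f # gs). eval op v g \<in> L"
  shows "eval op v (meet_form mt f gs) \<in> L \<and>
    (\<forall>g\<in>set (f # gs). lle op mt (eval op v (meet_form mt f gs)) (eval op v g))"
  using assms
proof (induction gs arbitrary: f)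
  case Nil
  then show ?case using meet_idem unfolding lle_def by auto
next
  case (Cons g gs)
  let ?m = "eval op v (meet_form mt g gs)"
  have IH: "?m \<in> L" "\<forall>h\<in>set (g # gs). lle op mt ?m (eval op v h)" and f: "eval op v f \<in> L"
    using Cons by auto
  have inL: "op mt [eval op v f, ?m] \<in> L"
    using meet_closed f IH(1) .
  have "lle op mt (op mt [eval op v f, ?m]) (eval op v h)" if "h \<in> set (g # gs)" for h
    using lle_trans[OF inL IH(1)] lle_meet2[OF f IH(1)] IH(2) that Cons.prems by auto
  then show ?case using inL lle_meet1[OF f IH(1)] by auto
qed

lemma eval_meet_form_greatest:
  "\<lbrakk>\<forall>g\<in>set (f # gs). eval op v g \<in> L; x \<in> L; \<forall>g\<in>set (f # gs). lle op mt x (eval op v g)\<rbrakk>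
    \<Longrightarrow> lle op mt x (eval op v (meet_form mt f gs))"
proof (induction gs arbitrary: f)
  case (Cons g gs)
  then show ?case
    using eval_meet_form_lower lle_meetI by auto
qed simp

end

definition right_renamings :: "nat set \<Rightarrow> nat set \<Rightarrow> (nat \<Rightarrow> nat) set" where
  "right_renamings R F = {r. \<forall>x. (x \<in> R \<longrightarrow> r x \<in> F) \<and> (x \<notin> R \<longrightarrow> r x = x)}"

lemma finite_right_renamings:
  assumes "finite R" "finite F"
  shows "finite (right_renamings R F)"
proof (rule finite_imageD)
  let ?restrict = "\<lambda>r x. if x \<in> R then r x else 0"
  have "?restrict ` right_renamings R F \<subseteq> {g. \<forall>x. (x \<in> R \<longrightarrow> g x \<in> F) \<and> (x \<notin> R \<longrightarrow> g x = 0)}"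
    unfolding right_renamings_def by auto
  then show "finite (?restrict ` right_renamings R F)"
    using finite_subset finite_set_of_finite_funs[OF assms] by blast
  show "inj_on ?restrict (right_renamings R F)"
  proof (rule inj_onI, rule ext)
    fix r s x
    assume "r \<in> right_renamings R F" "s \<in> right_renamings R F" "?restrict r = ?restrict s"
    then show "r x = s x"
      unfolding right_renamings_def by (cases "x \<in> R") (auto dest: fun_cong[of _ _ x])
  qed
qed

lemma valuation_factors_through_right_renaming:
  assumes "\<forall>x. v x \<in> L" "finite L" "finite F" "card L \<le> card F"
  obtains r v' where "r \<in> right_renamings R F" "\<forall>x. v' x \<in> L"
    "\<forall>x. x \<notin> F \<longrightarrow> v' x = v x" "\<forall>x\<in>R. v' (r x) = v x"
proof -
  obtain e where e: "e ` L \<subseteq> F" "inj_on e L"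
    using card_le_inj[OF assms(2-4)] by blast
  define v' where "v' x = (if x \<in> e ` L then inv_into L e x else v x)" for x
  define r where "r x = (if x \<in> R then e (v x) else x)" for x
  have "r \<in> right_renamings R F"
    unfolding right_renamings_def r_def using e(1) assms(1) by auto
  moreover have "\<forall>x. v' x \<in> L"
    unfolding v'_def using assms(1) by (simp add: inv_into_into)
  moreover have "\<forall>x. x \<notin> F \<longrightarrow> v' x = v x"
    unfolding v'_def using e(1) by auto
  moreover have "\<forall>x\<in>R. v' (r x) = v x"
    unfolding v'_def r_def using assms(1) e(2) by simp
  ultimately show thesis ..
qed

context
  fixes C ar pol jn mt im L op
  assumes lattice: "finite_L_lattice C ar pol jn mt im L op"
begin

lemma meet_in_signature: "mt \<in> C" "ar mt = 2"
  using lattice unfolding finite_L_lattice_def lsignature_def by auto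

lemma lattice_laws: "is_lattice L op jn mt"
  using lattice unfolding finite_L_lattice_def by simp

lemma meet_in_carrier: "x \<in> L \<Longrightarrow> y \<in> L \<Longrightarrow> op mt [x, y] \<in> L"
  using lattice meet_in_signature unfolding finite_L_lattice_def by simp

lemma eval_in_carrier: "\<lbrakk>\<forall>x. v x \<in> L; wf_form C ar f\<rbrakk> \<Longrightarrow> eval op v f \<in> L"
proof (induction f)
  case (App c fs)
  then have "c \<in> C" "length (map (eval op v) fs) = ar c" "set (map (eval op v) fs) \<subseteq> L"
    by auto
  then show ?case using lattice unfolding finite_L_lattice_def by simp
qed simp

lemma valid_le_rename_form:
  assumes "valid_le L op mt a b" "\<And>x. x \<in> fvars a \<Longrightarrow> r x = x"
  shows "valid_le L op mt a (rename_form r b)"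
  unfolding valid_le_def
proof (intro allI impI)
  fix v :: "nat \<Rightarrow> 'b" assume "\<forall>x. v x \<in> L"
  then have "lle op mt (eval op (v \<circ> r) a) (eval op (v \<circ> r) b)"
    using assms(1) unfolding valid_le_def by simp
  moreover have "eval op (v \<circ> r) a = eval op v a"
    using assms(2) by (intro eval_cong) simp
  ultimately show "lle op mt (eval op v a) (eval op v (rename_form r b))"
    by (simp add: eval_rename_form)
qed


lemma valid_le_of_right_renamings:
  assumes "finite F" "card L \<le> card F" "fvars i \<inter> F = {}" "fvars b \<inter> F = {}"
    and renamed: "\<And>r. r \<in> right_renamings R F \<Longrightarrow> valid_le L op mt i (rename_form r b)"
  shows "valid_le L op mt i b"
  unfolding valid_le_def
proof (intro allI impI)
  fix v :: "nat \<Rightarrow> 'b" assume v: "\<forall>x. v x \<in> L"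
  have "finite L" using lattice unfolding finite_L_lattice_def by simp
  then obtain r v' where r: "r \<in> right_renamings R F" and v': "\<forall>x. v' x \<in> L"
    "\<forall>x. x \<notin> F \<longrightarrow> v' x = v x" "\<forall>x\<in>R. v' (r x) = v x"
    using valuation_factors_through_right_renaming v assms(1,2) by metis
  have "eval op v' i = eval op v i"
    using assms(3) v'(2) by (intro eval_cong) auto
  moreover have "eval op (v' \<circ> r) b = eval op v b"
    using assms(4) v'(2,3) r unfolding right_renamings_def by (intro eval_cong) fastforce
  moreover have "lle op mt (eval op v' i) (eval op (v' \<circ> r) b)"
    using renamed[OF r] v' unfolding valid_le_def eval_rename_form by blast
  ultimately show "lle op mt (eval op v i) (eval op v b)"
    by simp
qed

lemma valid_le_trans:
  assumes "wf_form C ar a" "wf_form C ar b" "wf_form C ar c"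
    and "valid_le L op mt a b" "valid_le L op mt b c"
  shows "valid_le L op mt a c"
  unfolding valid_le_def
proof (intro allI impI)
  fix v :: "nat \<Rightarrow> 'b" assume "\<forall>x. v x \<in> L"
  then show "lle op mt (eval op v a) (eval op v c)"
    using assms lle_trans[OF lattice_laws meet_in_carrier] eval_in_carrier
    unfolding valid_le_def by blast
qed

lemma obtain_meet_form:
  assumes "finite G" "G \<noteq> {}" "\<forall>g\<in>G. wf_form C ar g"
  obtains m where "wf_form C ar m" "fvars m = (\<Union>g\<in>G. fvars g)"
    "\<And>g. g \<in> G \<Longrightarrow> valid_le L op mt m g"
    "\<And>a. wf_form C ar a \<Longrightarrow> (\<And>g. g \<in> G \<Longrightarrow> valid_le L op mt a g) \<Longrightarrow> valid_le L op mt a m"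
proof -
  obtain xs where "set xs = G"
    using finite_list[OF assms(1)] by blast
  then obtain f gs where G: "set (f # gs) = G"
    using assms(2) by (cases xs) auto
  let ?m = "meet_form mt f gs"
  have in_carrier: "\<forall>g\<in>set (f # gs). eval op v g \<in> L" if "\<forall>x. v x \<in> L" for v
    using eval_in_carrier[OF that] assms(3) unfolding G by blast
  show thesis
  proof
    show "wf_form C ar ?m"
      using assms(3) unfolding G[symmetric] by (intro wf_form_meet_form meet_in_signature)
    show "fvars ?m = (\<Union>g\<in>G. fvars g)"
      unfolding G[symmetric] fvars_meet_form ..
    show "valid_le L op mt ?m g" if "g \<in> G" for g
      unfolding valid_le_def
    proof (intro allI impI)
      fix v :: "nat \<Rightarrow> 'b" assume "\<forall>x. v x \<in> L"
      then have "\<forall>g\<in>set (f # gs). lle op mt (eval op v ?m) (eval op v g)"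
        using eval_meet_form_lower[OF lattice_laws meet_in_carrier in_carrier] by simp
      then show "lle op mt (eval op v ?m) (eval op v g)"
        using that unfolding G by simp
    qed
    show "valid_le L op mt a ?m"
      if a: "wf_form C ar a" and below: "\<And>g. g \<in> G \<Longrightarrow> valid_le L op mt a g" for a
      unfolding valid_le_def
    proof (intro allI impI)
      fix v :: "nat \<Rightarrow> 'b" assume v: "\<forall>x. v x \<in> L"
      have "\<forall>g\<in>set (f # gs). lle op mt (eval op v a) (eval op v g)"
        using below v unfolding valid_le_def G by simp
      then show "lle op mt (eval op v a) (eval op v ?m)"
        using eval_meet_form_greatest[OF lattice_laws meet_in_carrier in_carrier[OF v]
            eval_in_carrier[OF v a]] by simp
    qed
  qed
qed

lemma right_variables_reduction:
  assumes "wf_form C ar a" "wf_form C ar b" "valid_le L op mt a b"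
    and "finite F" "card L \<le> card F" "F \<inter> (fvars a \<union> fvars b) = {}"
  obtains b' where "wf_form C ar b'" "valid_le L op mt a b'" "fvars b' \<subseteq> (fvars a \<inter> fvars b) \<union> F"
    "\<And>i. wf_form C ar i \<Longrightarrow> fvars i \<inter> F = {} \<Longrightarrow> valid_le L op mt i b' \<Longrightarrow> valid_le L op mt i b"
proof -
  define R where "R = fvars b - fvars a"
  define G where "G = (\<lambda>r. rename_form r b) ` right_renamings R F"
  have "finite L" "L \<noteq> {}"
    using lattice unfolding finite_L_lattice_def by auto
  then obtain y where "y \<in> F"
    using assms(5) card_gt_0_iff[of L] by fastforce
  then have some_renaming: "(\<lambda>x. if x \<in> R then y else x) \<in> right_renamings R F"
    unfolding right_renamings_def by simp
  have "finite G"
    unfolding G_def R_def by (simp add: finite_right_renamings finite_fvars assms(4))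
  moreover have "G \<noteq> {}"
    unfolding G_def using some_renaming by blast
  moreover have wf_G: "\<forall>g\<in>G. wf_form C ar g"
    unfolding G_def using wf_form_rename_form assms(2) by blast
  ultimately obtain m where m: "wf_form C ar m" "fvars m = (\<Union>g\<in>G. fvars g)"
    "\<And>g. g \<in> G \<Longrightarrow> valid_le L op mt m g"
    "\<And>a. wf_form C ar a \<Longrightarrow> (\<And>g. g \<in> G \<Longrightarrow> valid_le L op mt a g) \<Longrightarrow> valid_le L op mt a m"
    by (rule obtain_meet_form) auto
  show thesis
  proof
    show "wf_form C ar m" by fact
    show "valid_le L op mt a m"
    proof (rule m(4)[OF assms(1)])
      fix g assume "g \<in> G"
      then obtain r where "r \<in> right_renamings R F" "g = rename_form r b"
        unfolding G_def by blast
      then show "valid_le L op mt a g"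
        using valid_le_rename_form[OF assms(3)] unfolding right_renamings_def R_def by simp
    qed
    show "fvars m \<subseteq> (fvars a \<inter> fvars b) \<union> F"
      unfolding m(2) G_def R_def right_renamings_def by (auto simp: fvars_rename_form)
    show "valid_le L op mt i b"
      if "wf_form C ar i" "fvars i \<inter> F = {}" "valid_le L op mt i m" for i
    proof (rule valid_le_of_right_renamings[OF assms(4,5) that(2)])
      show "fvars b \<inter> F = {}" using assms(6) by blast
      fix r assume "r \<in> right_renamings R F"
      then have "rename_form r b \<in> G" unfolding G_def by blast
      then show "valid_le L op mt i (rename_form r b)"
        using valid_le_trans[OF that(1) m(1) _ that(3) m(3)] wf_G by blast
    qed
  qed
qed

end

theorem lemma2:
  fixes C :: "'c set" and ar :: "'c \<Rightarrow> nat" and pol :: "'c \<Rightarrow> nat \<Rightarrow> bool"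
    and jn mt im :: 'c and L :: "'a set" and op :: "'c \<Rightarrow> 'a list \<Rightarrow> 'a" and n :: nat
  assumes "finite_L_lattice C ar pol jn mt im L op"
    and "card L \<le> n"
  shows "interpolation_property C ar L op mt \<longleftrightarrow>
    (\<forall>a b. wf_form C ar a \<and> wf_form C ar b \<and> valid_le L op mt a b \<and>
           card (right_vars a b) \<le> n \<longrightarrow> (\<exists>i. is_interpolant C ar L op mt a b i))"
    (is "_ \<longleftrightarrow> ?bounded")
proof
  assume ?bounded
  show "interpolation_property C ar L op mt"
    unfolding interpolation_property_def
  proof (intro allI impI, elim conjE)
    fix a b assume ab: "wf_form C ar a" "wf_form C ar b" "valid_le L op mt a b"
    obtain M where M: "\<forall>x\<in>fvars a \<union> fvars b. x < M"
      using finite_nat_set_iff_bounded finite_fvars by blast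
    then have fresh: "{M..<M + n} \<inter> (fvars a \<union> fvars b) = {}"
      by (meson Int_emptyI atLeastLessThan_iff not_less)
    obtain b' where b': "wf_form C ar b'" "valid_le L op mt a b'"
      "fvars b' \<subseteq> (fvars a \<inter> fvars b) \<union> {M..<M + n}"
      "\<And>i. wf_form C ar i \<Longrightarrow> fvars i \<inter> {M..<M + n} = {} \<Longrightarrow> valid_le L op mt i b' \<Longrightarrow> valid_le L op mt i b"
      using right_variables_reduction[OF assms(1) ab _ _ fresh] assms(2) by auto
    have "card (right_vars a b') \<le> n"
      using b'(3) card_mono[of "{M..<M + n}" "right_vars a b'"] unfolding right_vars_def by auto
    then obtain i where "is_interpolant C ar L op mt a b' i"
      using \<open>?bounded\<close> ab b' by blast
    then have "is_interpolant C ar L op mt a b i"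
      using b'(3,4) fresh unfolding is_interpolant_def by blast
    then show "\<exists>i. is_interpolant C ar L op mt a b i" ..
  qed
qed (auto simp: interpolation_property_def)

end
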